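(* For every nondeterministic multihead finite automaton $\mathcal M$ with input alphabet $\Sigma$ there is an interpretation $\pi:\Gamma_2\to\Sigma$ such that for every sufficiently long string $x\in\Sigma^\star$, the structure $x^\pi$ is isomorphic to the configuration graph of $\mathcal M$ on input $x$ (as a 2-pointed directed graph). Furthermore, $\pi$ can be expanded to an interpretation $\pi:(\Gamma_2,S)\to\Sigma$ such that $x^\pi$ is a successor expansion of that configuration graph. Moreover, $\pi$ can be taken quantifier-free.
   Context: A nondeterministic multihead finite automaton (NMFA) consists of a finite set $Q$ of states, a number $k$ of heads, an input alphabet $\Sigma$, a start state $q_0$, an accept state $q_f$, and a transition relation $\delta$ which, depending on the current state and the $k$-tuple of symbols in $\Sigma\cup\{\triangleright,\triangleleft\}$ read by the heads, allows a new state and a move vector in $\{-1,0,1\}^k$. The tape holds the input string between a left endmarker $\triangleright$ and a right endmarker $\triangleleft$; heads cannot write; a head reading $\triangleright$ (resp. $\triangleleft$) never moves left (resp. right); in state $q_f$ the transitions move every head left if possible and otherwise keep it in place. A configuration on input $x$ consists of the current state and the positions of the heads. The configuration graph on input $x$ is the 2-pointed directed graph whose vertices are the configurations on $x$, with an edge from $c$ to $c'$ iff $c'$ is reachable from $c$ in one step, and whose distinguished vertices $s,t$ are the initial configuration (state $q_0$, all heads at the left) and the final configuration (state $q_f$, all heads at the left). A string $x=x_0\cdots x_{n-1}\in\Sigma^\star$ is viewed as the structure with domain $\{0,\dots,n-1\}$, a unary predicate for each $\sigma\in\Sigma$ holding at $i$ iff $x_i=\sigma$, constants $\min=0$ and $\max=n-1$,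 and a successor function $S$ with $S(i)=i+1$; $\Sigma$ also denotes this signature. $\Gamma_2$ is the signature with a binary relation symbol $E$ and two constants $s,t$. A successor expansion of a finite structure $A$ is $(A,\min,\max,S)$ with $S$ the successor function of some linear order of the domain having endpoints $\min,\max$; $(\Gamma_2,S)$ is $\Gamma_2$ plus constants $\min,\max$ and the unary function symbol $S$. A $k$-ary interpretation $\pi:L\to K$ consists of a $K$-formula $\partial^\pi(\bar x)$ in a $k$-tuple of variables, for each $n$-ary relation symbol $r$ of $L$ a $K$-formula $r^\pi(\bar x_1,\dots,\bar x_n)$, and for each function or constant symbol of $L$ a definition by cases (cases given by $K$-formulas, values $k$-tuples of $K$-terms). It is quantifier-free if all these formulas are. For a $K$-structure $A$, $A^\pi$ is the $L$-structure with domain $\{\bar a\in A^k: A\models\partial^\pi(\bar a)\}$ and symbols interpreted by their translations. *)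

theory Defs
  imports Main
begin

datatype 'a tsym = LEnd | REnd | Sym 'a

text \<open>The state set Q is the (finite) type 'q. Transitions are tuples
  (state, k-tuple of symbols read, new state, move vector).\<close>
record ('q, 'a) nmfa =
  heads :: nat
  start :: 'q
  final :: 'q
  trans :: "('q \<times> 'a tsym list \<times> 'q \<times> int list) set"

definition final_moves :: "'a tsym list \<Rightarrow> int list" where
  "final_moves a = map (\<lambda>s. if s = LEnd then 0 else -1) a"

definition nmfa_wf :: "('q, 'a) nmfa \<Rightarrow> bool" where
  "nmfa_wf M \<longleftrightarrow>
     (\<forall>(q, a, q', d) \<in> trans M.
        length a = heads M \<and> length d = heads M \<and> set d \<subseteq> {-1, 0, 1} \<and>
        (\<forall>i < heads M. (a ! i = LEnd \<longrightarrow> d ! i \<noteq> -1) \<and> (a ! i = REnd \<longrightarrow> d ! i \<noteq> 1))) \<and>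
     (\<forall>a. length a = heads M \<longrightarrow>
        {(q', d). (final M, a, q', d) \<in> trans M} = {(final M, final_moves a)})"

text \<open>Tape cell j on input x: cell 0 is the left endmarker, cells 1..n hold
  x_0..x_{n-1}, cell n+1 is the right endmarker.\<close>
definition tape_sym :: "'a list \<Rightarrow> nat \<Rightarrow> 'a tsym" where
  "tape_sym x j = (if j = 0 then LEnd else if j \<le> length x then Sym (x ! (j - 1)) else REnd)"

definition configs :: "('q, 'a) nmfa \<Rightarrow> 'a list \<Rightarrow> ('q \<times> nat list) set" where
  "configs M x = {(q, p). length p = heads M \<and> (\<forall>j \<in> set p. j \<le> length x + 1)}"

definition conf_edges :: "('q, 'a) nmfa \<Rightarrow> 'a list \<Rightarrow> (('q \<times> nat list) \<times> ('q \<times> nat list)) set" where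
  "conf_edges M x = {((q, p), (q', p')). (q, p) \<in> configs M x \<and> (q', p') \<in> configs M x \<and>
      (\<exists>d. (q, map (tape_sym x) p, q', d) \<in> trans M \<and> length d = length p \<and>
           map int p' = map2 (\<lambda>j e. int j + e) p d)}"

definition init_conf :: "('q, 'a) nmfa \<Rightarrow> 'q \<times> nat list" where
  "init_conf M = (start M, replicate (heads M) 0)"

definition final_conf :: "('q, 'a) nmfa \<Rightarrow> 'q \<times> nat list" where
  "final_conf M = (final M, replicate (heads M) 0)"

datatype trm = TVar nat | TMin | TMax | TS trm

datatype 'a fm = FPred 'a trm | FEq trm trm | FNeg "'a fm" | FConj "'a fm" "'a fm" | FEx nat "'a fm"

text \<open>Convention: S(max) = max.\<close>
fun eval_trm :: "nat \<Rightarrow> (nat \<Rightarrow> nat) \<Rightarrow> trm \<Rightarrow> nat" where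
  "eval_trm n v (TVar i) = v i"
| "eval_trm n v TMin = 0"
| "eval_trm n v TMax = n - 1"
| "eval_trm n v (TS t) = (let e = eval_trm n v t in if Suc e < n then Suc e else e)"

fun sat :: "'a list \<Rightarrow> (nat \<Rightarrow> nat) \<Rightarrow> 'a fm \<Rightarrow> bool" where
  "sat x v (FPred \<sigma> t) = (x ! eval_trm (length x) v t = \<sigma>)"
| "sat x v (FEq t u) = (eval_trm (length x) v t = eval_trm (length x) v u)"
| "sat x v (FNeg \<phi>) = (\<not> sat x v \<phi>)"
| "sat x v (FConj \<phi> \<psi>) = (sat x v \<phi> \<and> sat x v \<psi>)"
| "sat x v (FEx i \<phi>) = (\<exists>a < length x. sat x (v(i := a)) \<phi>)"

fun fv_trm :: "trm \<Rightarrow> nat set" where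
  "fv_trm (TVar i) = {i}"
| "fv_trm TMin = {}"
| "fv_trm TMax = {}"
| "fv_trm (TS t) = fv_trm t"

fun fv :: "'a fm \<Rightarrow> nat set" where
  "fv (FPred \<sigma> t) = fv_trm t"
| "fv (FEq t u) = fv_trm t \<union> fv_trm u"
| "fv (FNeg \<phi>) = fv \<phi>"
| "fv (FConj \<phi> \<psi>) = fv \<phi> \<union> fv \<psi>"
| "fv (FEx i \<phi>) = fv \<phi> - {i}"

fun qfree :: "'a fm \<Rightarrow> bool" where
  "qfree (FPred \<sigma> t) = True"
| "qfree (FEq t u) = True"
| "qfree (FNeg \<phi>) = qfree \<phi>"
| "qfree (FConj \<phi> \<psi>) = (qfree \<phi> \<and> qfree \<psi>)"
| "qfree (FEx i \<phi>) = False"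

text \<open>A definition by cases: a list of (condition, value tuple) pairs, the first
  case whose condition holds applies; the second component is the "otherwise" value.\<close>
type_synonym 'a cases = "('a fm \<times> trm list) list \<times> trm list"

text \<open>idim = k (arity); the tuple variable x-bar is variables 0..k-1, in the edge
  formula x-bar_1 is 0..k-1 and x-bar_2 is k..2k-1.\<close>
record 'a interp =
  idim :: nat
  idom :: "'a fm"
  iedge :: "'a fm"
  i_s :: "'a cases"
  i_t :: "'a cases"
  i_min :: "'a cases"
  i_max :: "'a cases"
  i_succ :: "'a cases"

definition cases_wf :: "nat \<Rightarrow> nat \<Rightarrow> 'a cases \<Rightarrow> bool" where
  "cases_wf k m c \<longleftrightarrow>
     (\<forall>(\<phi>, ts) \<in> set (fst c). fv \<phi> \<subseteq> {..<m} \<and> length ts = k \<and> (\<forall>t \<in> set ts. fv_trm t \<subseteq> {..<m})) \<and>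
     length (snd c) = k \<and> (\<forall>t \<in> set (snd c). fv_trm t \<subseteq> {..<m})"

definition cases_qf :: "'a cases \<Rightarrow> bool" where
  "cases_qf c \<longleftrightarrow> (\<forall>(\<phi>, ts) \<in> set (fst c). qfree \<phi>)"

definition interp_wf :: "'a interp \<Rightarrow> bool" where
  "interp_wf \<pi> \<longleftrightarrow>
     fv (idom \<pi>) \<subseteq> {..<idim \<pi>} \<and> fv (iedge \<pi>) \<subseteq> {..<2 * idim \<pi>} \<and>
     cases_wf (idim \<pi>) 0 (i_s \<pi>) \<and> cases_wf (idim \<pi>) 0 (i_t \<pi>) \<and>
     cases_wf (idim \<pi>) 0 (i_min \<pi>) \<and> cases_wf (idim \<pi>) 0 (i_max \<pi>) \<and>
     cases_wf (idim \<pi>) (idim \<pi>) (i_succ \<pi>)"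

definition interp_qf :: "'a interp \<Rightarrow> bool" where
  "interp_qf \<pi> \<longleftrightarrow> qfree (idom \<pi>) \<and> qfree (iedge \<pi>) \<and>
     cases_qf (i_s \<pi>) \<and> cases_qf (i_t \<pi>) \<and> cases_qf (i_min \<pi>) \<and> cases_qf (i_max \<pi>) \<and>
     cases_qf (i_succ \<pi>)"

definition asg :: "nat list \<Rightarrow> nat \<Rightarrow> nat" where
  "asg as i = (if i < length as then as ! i else 0)"

definition eval_cases :: "'a list \<Rightarrow> (nat \<Rightarrow> nat) \<Rightarrow> 'a cases \<Rightarrow> nat list" where
  "eval_cases x v c =
     (case find (\<lambda>(\<phi>, ts). sat x v \<phi>) (fst c) of
        Some (\<phi>, ts) \<Rightarrow> map (eval_trm (length x) v) ts
      | None \<Rightarrow> map (eval_trm (length x) v) (snd c))"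

definition idomain :: "'a interp \<Rightarrow> 'a list \<Rightarrow> nat list set" where
  "idomain \<pi> x = {as. length as = idim \<pi> \<and> set as \<subseteq> {..<length x} \<and> sat x (asg as) (idom \<pi>)}"

definition iE :: "'a interp \<Rightarrow> 'a list \<Rightarrow> (nat list \<times> nat list) set" where
  "iE \<pi> x = {(as, bs). as \<in> idomain \<pi> x \<and> bs \<in> idomain \<pi> x \<and> sat x (asg (as @ bs)) (iedge \<pi>)}"

definition iconst :: "'a cases \<Rightarrow> 'a list \<Rightarrow> nat list" where
  "iconst c x = eval_cases x (asg []) c"

definition iS :: "'a interp \<Rightarrow> 'a list \<Rightarrow> nat list \<Rightarrow> nat list" where
  "iS \<pi> x as = eval_cases x (asg as) (i_succ \<pi>)"

definition two_pointed_iso ::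
  "'u set \<Rightarrow> ('u \<times> 'u) set \<Rightarrow> 'u \<Rightarrow> 'u \<Rightarrow> 'w set \<Rightarrow> ('w \<times> 'w) set \<Rightarrow> 'w \<Rightarrow> 'w \<Rightarrow> bool" where
  "two_pointed_iso V E s t V' E' s' t' \<longleftrightarrow> s \<in> V \<and> t \<in> V \<and>
     (\<exists>f. bij_betw f V V' \<and> (\<forall>a \<in> V. \<forall>b \<in> V. (a, b) \<in> E \<longleftrightarrow> (f a, f b) \<in> E') \<and>
          f s = s' \<and> f t = t')"

definition successor_on :: "'u set \<Rightarrow> 'u \<Rightarrow> 'u \<Rightarrow> ('u \<Rightarrow> 'u) \<Rightarrow> bool" where
  "successor_on V mn mx S \<longleftrightarrow>
     (\<exists>L. distinct L \<and> set L = V \<and> L \<noteq> [] \<and> hd L = mn \<and> last L = mx \<and>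
          (\<forall>i. Suc i < length L \<longrightarrow> S (L ! i) = L ! Suc i) \<and> S mx = mx)"

end

theory Submission
  imports Defs
begin

text \<open>Coding each position by two elements of the input and the
  state by one, configurations become \<open>(2k + 1)\<close>-tuples once \<open>n\<close> exceeds the number of states.
  In this coding, being a code, reading a symbol and moving a head by one cell only compare
  coordinates with each other, with constants and with successors of coordinates, so the domain
  and edge formulas are quantifier-free; the edge formula is a disjunction over the finitely many
  transitions. Counting configurations in mixed radix gives the successor function of a linear
  order on them, and a carry is again a quantifier-free definition by cases.\<close>

fun TNum :: "nat \<Rightarrow> trm" where
  "TNum 0 = TMin"
| "TNum (Suc i) = TS (TNum i)"

definition FTrue :: "'a fm" where
  "FTrue = FEq TMin TMin"

definition FOr :: "'a fm \<Rightarrow> 'a fm \<Rightarrow> 'a fm" where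
  "FOr \<phi> \<psi> = FNeg (FConj (FNeg \<phi>) (FNeg \<psi>))"

fun FAnds :: "'a fm list \<Rightarrow> 'a fm" where
  "FAnds [] = FTrue"
| "FAnds (\<phi> # \<phi>s) = FConj \<phi> (FAnds \<phi>s)"

fun FOrs :: "'a fm list \<Rightarrow> 'a fm" where
  "FOrs [] = FNeg FTrue"
| "FOrs (\<phi> # \<phi>s) = FOr \<phi> (FOrs \<phi>s)"

lemma eval_TNum [simp]: "i < n \<Longrightarrow> eval_trm n v (TNum i) = i"
  by (induction i) (auto simp: Let_def)

lemma fv_TNum [simp]: "fv_trm (TNum i) = {}"
  by (induction i) auto

lemma sat_FTrue [simp]: "sat x v FTrue"
  and sat_FOr [simp]: "sat x v (FOr \<phi> \<psi>) \<longleftrightarrow> sat x v \<phi> \<or> sat x v \<psi>"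
  and sat_FAnds [simp]: "sat x v (FAnds \<phi>s) \<longleftrightarrow> (\<forall>\<phi>\<in>set \<phi>s. sat x v \<phi>)"
  and sat_FOrs [simp]: "sat x v (FOrs \<phi>s) \<longleftrightarrow> (\<exists>\<phi>\<in>set \<phi>s. sat x v \<phi>)"
  by (induction \<phi>s) (auto simp: FTrue_def FOr_def)

lemma fv_FTrue [simp]: "fv FTrue = {}"
  and fv_FOr [simp]: "fv (FOr \<phi> \<psi>) = fv \<phi> \<union> fv \<psi>"
  and fv_FAnds [simp]: "fv (FAnds \<phi>s) = (\<Union>\<phi>\<in>set \<phi>s. fv \<phi>)"
  and fv_FOrs [simp]: "fv (FOrs \<phi>s) = (\<Union>\<phi>\<in>set \<phi>s. fv \<phi>)"
  by (induction \<phi>s) (auto simp: FTrue_def FOr_def)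

lemma qfree_FTrue [simp]: "qfree FTrue"
  and qfree_FOr [simp]: "qfree (FOr \<phi> \<psi>) \<longleftrightarrow> qfree \<phi> \<and> qfree \<psi>"
  and qfree_FAnds [simp]: "qfree (FAnds \<phi>s) \<longleftrightarrow> (\<forall>\<phi>\<in>set \<phi>s. qfree \<phi>)"
  and qfree_FOrs [simp]: "qfree (FOrs \<phi>s) \<longleftrightarrow> (\<forall>\<phi>\<in>set \<phi>s. qfree \<phi>)"
  by (induction \<phi>s) (auto simp: FTrue_def FOr_def)

lemma asg_nth [simp]: "i < length as \<Longrightarrow> asg as i = as ! i"
  by (simp add: asg_def)

lemma eval_TVars: "map (eval_trm n (asg as)) (map TVar [0..<length as]) = as"
  by (rule nth_equalityI) simp_all

lemma asg_append: "asg (as @ bs) i = (if i < length as then asg as i else asg bs (i - length as))"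
  by (simp add: asg_def nth_append) arith

lemma eval_cases_eqI:
  assumes "(\<phi>, ts) \<in> set (fst c)" "sat x v \<phi>"
    and "\<And>\<phi>' ts'. (\<phi>', ts') \<in> set (fst c) \<Longrightarrow> sat x v \<phi>' \<Longrightarrow> map (eval_trm (length x) v) ts' = r"
  shows "eval_cases x v c = r"
proof -
  obtain \<phi>' ts' where found: "find (\<lambda>(\<phi>, ts). sat x v \<phi>) (fst c) = Some (\<phi>', ts')"
    using assms(1,2) by (cases "find (\<lambda>(\<phi>, ts). sat x v \<phi>) (fst c)") (auto simp: find_None_iff)
  then have "(\<phi>', ts') \<in> set (fst c)" "sat x v \<phi>'"
    by (auto simp: find_Some_iff) (metis nth_mem)
  with found assms(3) show ?thesis
    by (simp add: eval_cases_def)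
qed

lemma eval_cases_default:
  assumes "\<And>\<phi> ts. (\<phi>, ts) \<in> set (fst c) \<Longrightarrow> \<not> sat x v \<phi>"
  shows "eval_cases x v c = map (eval_trm (length x) v) (snd c)"
proof -
  have "find (\<lambda>(\<phi>, ts). sat x v \<phi>) (fst c) = None"
    using assms by (auto simp: find_None_iff)
  then show ?thesis
    by (simp add: eval_cases_def)
qed

section \<open>Mixed-radix numerals\<close>

fun radix_val :: "nat list \<Rightarrow> nat list \<Rightarrow> nat" where
  "radix_val (m # ms) (d # ds) = d + m * radix_val ms ds"
| "radix_val _ _ = 0"

fun radix_digits :: "nat list \<Rightarrow> nat \<Rightarrow> nat list" where
  "radix_digits [] i = []"
| "radix_digits (m # ms) i = i mod m # radix_digits ms (i div m)"

definition incr_at :: "nat \<Rightarrow> nat list \<Rightarrow> nat list" where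
  "incr_at j ds = replicate j 0 @ Suc (ds ! j) # drop (Suc j) ds"

lemma length_incr_at [simp]: "j < length ds \<Longrightarrow> length (incr_at j ds) = length ds"
  by (simp add: incr_at_def)

lemma nth_incr_at:
  "j < length ds \<Longrightarrow> i < length ds \<Longrightarrow>
     incr_at j ds ! i = (if i < j then 0 else if i = j then Suc (ds ! j) else ds ! i)"
  by (auto simp: incr_at_def nth_append nth_Cons split: nat.split)
    (rule arg_cong[where f = "(!) ds"], arith)

lemma incr_at_append: "j < length ds \<Longrightarrow> incr_at j (ds @ es) = incr_at j ds @ es"
  by (simp add: incr_at_def nth_append)

lemma incr_at_append_length: "incr_at (length ds) (ds @ [d]) = replicate (length ds) 0 @ [Suc d]"
  by (simp add: incr_at_def)

lemma radix_val_radix_digits: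
  "i < prod_list ms \<Longrightarrow> list_all2 (<) (radix_digits ms i) ms \<and> radix_val ms (radix_digits ms i) = i"
proof (induction ms arbitrary: i)
  case (Cons m ms)
  then have "0 < m"
    by (cases m) auto
  with Cons.prems have "i div m < prod_list ms"
    by (simp add: div_less_iff_less_mult mult.commute)
  with Cons.IH \<open>0 < m\<close> show ?case
    by simp
qed simp

lemma radix_digits_radix_val:
  "list_all2 (<) ds ms \<Longrightarrow> radix_val ms ds < prod_list ms \<and> radix_digits ms (radix_val ms ds) = ds"
proof (induction ds ms rule: list_all2_induct)
  case (Cons d ds m ms)
  have "d + m * radix_val ms ds < m * Suc (radix_val ms ds)"
    using Cons by simp
  also have "\<dots> \<le> m * prod_list ms"
    using Cons by (intro mult_le_mono2) simp
  finally show ?case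
    using Cons by simp
qed simp

lemma bij_betw_radix_digits:
  "bij_betw (radix_digits ms) {..<prod_list ms} {ds. list_all2 (<) ds ms}"
  by (rule bij_betw_byWitness[where f' = "radix_val ms"])
    (auto dest: radix_val_radix_digits radix_digits_radix_val)

lemma radix_digits_0: "radix_digits ms 0 = replicate (length ms) 0"
  by (induction ms) auto

lemma radix_digits_last:
  "0 < prod_list ms \<Longrightarrow> radix_digits ms (prod_list ms - 1) = map (\<lambda>m. m - 1) ms"
proof (induction ms)
  case (Cons m ms)
  then obtain m' P where "m = Suc m'" "prod_list ms = Suc P"
    by (metis gr0_implies_Suc mult_eq_0_iff neq0_conv prod_list.Cons)
  then have "prod_list (m # ms) - 1 = m' + m * P"
    by simp
  moreover have "(m' + m * P) mod m = m'" "(m' + m * P) div m = P"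
    using \<open>m = Suc m'\<close> by (simp_all only: mod_mult_self2 div_mult_self2) simp_all
  ultimately show ?case
    using Cons \<open>prod_list ms = Suc P\<close> by simp
qed simp

lemma radix_digits_Suc:
  assumes "Suc i < prod_list ms"
  obtains j where "j < length ms" "\<forall>l<j. Suc (radix_digits ms i ! l) = ms ! l"
    "Suc (radix_digits ms i ! j) < ms ! j" "radix_digits ms (Suc i) = incr_at j (radix_digits ms i)"
  using assms
proof (induction ms arbitrary: i thesis)
  case (Cons m ms)
  from Cons.prems(2) have "0 < m"
    by (cases m) auto
  show ?case
  proof (cases "Suc (i mod m) < m")
    case True
    then have "Suc i mod m = Suc (i mod m)" "Suc i div m = i div m"
      by (simp_all add: mod_Suc div_Suc)
    then show ?thesis
      using True by (intro Cons.prems(1)[of 0]) (simp_all add: incr_at_def)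
  next
    case False
    with \<open>0 < m\<close> have top: "Suc (i mod m) = m"
      using mod_less_divisor[of m i] by linarith
    then have next_digits: "Suc i mod m = 0" "Suc i div m = Suc (i div m)"
      by (simp_all add: mod_Suc div_Suc)
    have "m * Suc (i div m) = Suc i"
      using top mult_div_mod_eq[of m i] by (simp only: mult_Suc_right)
    then have "Suc (i div m) < prod_list ms"
      using Cons.prems(2) by (metis mult_less_cancel1 prod_list.Cons)
    then obtain j where "j < length ms" "\<forall>l<j. Suc (radix_digits ms (i div m) ! l) = ms ! l"
      "Suc (radix_digits ms (i div m) ! j) < ms ! j"
      "radix_digits ms (Suc (i div m)) = incr_at j (radix_digits ms (i div m))"
      using Cons.IH[of "i div m"] by blast
    then show ?thesis
      using top next_digits
      by (intro Cons.prems(1)[of "Suc j"]) (auto simp: incr_at_def nth_Cons split: nat.split)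
  qed
qed simp

lemma successor_on_enumeration:
  assumes f: "bij_betw f {..<N} V" and "0 < N"
    and step: "\<And>i. Suc i < N \<Longrightarrow> S (f i) = f (Suc i)" and top: "S (f (N - 1)) = f (N - 1)"
  shows "successor_on V (f 0) (f (N - 1)) S"
  unfolding successor_on_def
proof (intro exI conjI allI impI)
  let ?L = "map f [0..<N]"
  show "distinct ?L" "set ?L = V"
    using f by (simp_all add: bij_betw_def distinct_map atLeast0LessThan)
  show "?L \<noteq> []" "hd ?L = f 0" "last ?L = f (N - 1)"
    using \<open>0 < N\<close> by (simp_all add: hd_map last_map)
  show "S (?L ! i) = ?L ! Suc i" if "Suc i < length ?L" for i
    using that step by simp
qed (rule top)

lemma two_pointed_isoI:
  assumes g: "bij_betw g V' V"
    and edges: "\<And>a b. a \<in> V' \<Longrightarrow> b \<in> V' \<Longrightarrow> (g a, g b) \<in> E \<longleftrightarrow> (a, b) \<in> E'"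
    and "s' \<in> V'" "t' \<in> V'"
  shows "two_pointed_iso V E (g s') (g t') V' E' s' t'"
  unfolding two_pointed_iso_def
proof (intro conjI exI ballI)
  let ?f = "the_inv_into V' g"
  show "g s' \<in> V" "g t' \<in> V"
    using g \<open>s' \<in> V'\<close> \<open>t' \<in> V'\<close> by (auto simp: bij_betw_def)
  show "bij_betw ?f V V'"
    using g by (rule bij_betw_the_inv_into)
  show "?f (g s') = s'" "?f (g t') = t'"
    using g \<open>s' \<in> V'\<close> \<open>t' \<in> V'\<close> by (simp_all add: bij_betw_def the_inv_into_f_f)
  fix a b assume "a \<in> V" "b \<in> V"
  then show "(a, b) \<in> E \<longleftrightarrow> (?f a, ?f b) \<in> E'"
    using edges[of "?f a" "?f b"] g
    by (simp add: f_the_inv_into_f_bij_betw bij_betw_apply[OF bij_betw_the_inv_into])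
qed

section \<open>Coding configurations by tuples\<close>

definition state_index :: "'q list \<Rightarrow> 'q \<Rightarrow> nat" where
  "state_index qs q = the_inv_into {..<length qs} ((!) qs) q"

text \<open>A head position \<open>h \<in> {0, \<dots>, n + 1}\<close> does not fit into one element of an input of
  length \<open>n\<close>, so it is stored as a pair (kind, offset): \<open>(1, 0)\<close> for the left endmarker,
  \<open>(0, h - 1)\<close> for an input cell and \<open>(2, 0)\<close> for the right endmarker. A configuration is
  encoded by the kinds of all heads, then their offsets, then the index of the state; this needs
  \<open>n \<ge> 3\<close> and more input elements than states.\<close>

definition cell_kind :: "nat \<Rightarrow> nat \<Rightarrow> nat" where
  "cell_kind n h = (if h = 0 then 1 else if h \<le> n then 0 else 2)"

definition cell_offset :: "nat \<Rightarrow> nat \<Rightarrow> nat" where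
  "cell_offset n h = (if 0 < h \<and> h \<le> n then h - 1 else 0)"

definition cell_position :: "nat \<Rightarrow> nat \<Rightarrow> nat \<Rightarrow> nat" where
  "cell_position n a b = (if a = 1 then 0 else if a = 0 then Suc b else Suc n)"

definition encode_config :: "'q list \<Rightarrow> nat \<Rightarrow> 'q \<times> nat list \<Rightarrow> nat list" where
  "encode_config qs n c =
     map (cell_kind n) (snd c) @ map (cell_offset n) (snd c) @ [state_index qs (fst c)]"

definition decode_config :: "'q list \<Rightarrow> nat \<Rightarrow> nat \<Rightarrow> nat list \<Rightarrow> 'q \<times> nat list" where
  "decode_config qs n k as =
     (qs ! (as ! (2 * k)), map (\<lambda>i. cell_position n (as ! i) (as ! (k + i))) [0..<k])"

definition cell_fm :: "nat \<Rightarrow> nat \<Rightarrow> 'a fm" where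
  "cell_fm k i = FOrs [FConj (FEq (TVar i) (TNum 1)) (FEq (TVar (k + i)) TMin),
                      FEq (TVar i) TMin,
                      FConj (FEq (TVar i) (TNum 2)) (FEq (TVar (k + i)) TMin)]"

definition config_fm :: "nat \<Rightarrow> nat \<Rightarrow> 'a fm" where
  "config_fm nq k = FConj (FAnds (map (cell_fm k) [0..<k]))
                          (FOrs (map (\<lambda>j. FEq (TVar (2 * k)) (TNum j)) [0..<nq]))"

lemma cell_position_kind_offset: "h \<le> Suc n \<Longrightarrow> cell_position n (cell_kind n h) (cell_offset n h) = h"
  by (auto simp: cell_position_def cell_kind_def cell_offset_def)

lemma cell_kind_offset_eq_iff:
  "h \<le> Suc n \<Longrightarrow> h' \<le> Suc n \<Longrightarrow>
     cell_kind n h = cell_kind n h' \<and> cell_offset n h = cell_offset n h' \<longleftrightarrow> h = h'"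
  by (metis cell_position_kind_offset)

lemma ex_cell_iff:
  "b < n \<Longrightarrow> (\<exists>h\<le>Suc n. a = cell_kind n h \<and> b = cell_offset n h) \<longleftrightarrow>
     (a = 1 \<and> b = 0) \<or> a = 0 \<or> (a = 2 \<and> b = 0)"
proof
  assume "b < n" "(a = 1 \<and> b = 0) \<or> a = 0 \<or> (a = 2 \<and> b = 0)"
  then consider "a = 1" "b = 0" | "a = 0" | "a = 2" "b = 0"
    by blast
  then show "\<exists>h\<le>Suc n. a = cell_kind n h \<and> b = cell_offset n h"
  proof cases
    case 1 then show ?thesis by (intro exI[of _ 0]) (simp add: cell_kind_def cell_offset_def)
  next
    case 2 then show ?thesis
      using \<open>b < n\<close> by (intro exI[of _ "Suc b"]) (simp add: cell_kind_def cell_offset_def)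
  next
    case 3 then show ?thesis by (intro exI[of _ "Suc n"]) (simp add: cell_kind_def cell_offset_def)
  qed
qed (auto simp: cell_kind_def cell_offset_def split: if_splits)

lemma length_encode_config [simp]: "length (encode_config qs n c) = 2 * length (snd c) + 1"
  by (simp add: encode_config_def)

lemma nth_encode_config:
  assumes "length p = k" "i < k"
  shows "encode_config qs n (q, p) ! i = cell_kind n (p ! i)"
    and "encode_config qs n (q, p) ! (k + i) = cell_offset n (p ! i)"
  using assms by (simp_all add: encode_config_def nth_append)

lemma nth_encode_config_state:
  "length p = k \<Longrightarrow> encode_config qs n (q, p) ! (2 * k) = state_index qs q"
  by (simp add: encode_config_def nth_append)

lemma encode_config_eqI:
  assumes "length p = k" "length as = 2 * k + 1"
    and "\<And>i. i < k \<Longrightarrow> as ! i = cell_kind n (p ! i)"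
    and "\<And>i. i < k \<Longrightarrow> as ! (k + i) = cell_offset n (p ! i)"
    and "as ! (2 * k) = state_index qs q"
  shows "as = encode_config qs n (q, p)"
proof (rule nth_equalityI)
  show "length as = length (encode_config qs n (q, p))"
    using assms(1,2) by simp
  fix j assume "j < length as"
  then consider (kind) "j < k" | (offset) i where "i < k" "j = k + i" | (state) "j = 2 * k"
    using assms(2)
    by (metis add_less_imp_less_left le_add_diff_inverse less_Suc_eq mult_2 not_le Suc_eq_plus1)
  then show "as ! j = encode_config qs n (q, p) ! j"
    by cases (use assms in \<open>simp_all add: nth_encode_config nth_encode_config_state\<close>)
qed

lemma cell_kind_0 [simp]: "cell_kind n 0 = 1"
  and cell_offset_0 [simp]: "cell_offset n 0 = 0"
  and cell_kind_Suc [simp]: "cell_kind n (Suc h) = (if h < n then 0 else 2)"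
  and cell_offset_Suc [simp]: "cell_offset n (Suc h) = (if h < n then h else 0)"
  by (simp_all add: cell_kind_def cell_offset_def)

lemma cell_kind_eq_2_iff: "h \<le> Suc n \<Longrightarrow> cell_kind n h = 2 \<longleftrightarrow> h = Suc n"
  by (simp add: cell_kind_def)

locale config_coding =
  fixes M :: "('q, 'a) nmfa" and qs :: "'q list" and x :: "'a list"
  assumes distinct_qs: "distinct qs" and set_qs: "set qs = UNIV"
    and long_input: "length qs + 3 \<le> length x"
begin

abbreviation "n \<equiv> length x"
abbreviation "k \<equiv> heads M"
abbreviation "encode \<equiv> encode_config qs n"

definition config_tuples :: "nat list set" where
  "config_tuples =
     {as. length as = 2 * k + 1 \<and> set as \<subseteq> {..<n} \<and> sat x (asg as) (config_fm (length qs) k)}"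

lemma bij_betw_nth_qs: "bij_betw ((!) qs) {..<length qs} UNIV"
  using distinct_qs set_qs unfolding bij_betw_def
  by (metis inj_on_nth lessThan_iff atLeast_upt image_set map_nth)

lemma state_index_less [simp]: "state_index qs q < length qs"
  using bij_betw_nth_qs unfolding state_index_def bij_betw_def
  by (metis UNIV_I lessThan_iff the_inv_into_into subset_refl)

lemma nth_state_index [simp]: "qs ! state_index qs q = q"
  using bij_betw_nth_qs unfolding state_index_def
  by (metis UNIV_I bij_betw_def f_the_inv_into_f)

lemma state_index_nth [simp]: "i < length qs \<Longrightarrow> state_index qs (qs ! i) = i"
  using bij_betw_nth_qs unfolding state_index_def
  by (simp add: bij_betw_def the_inv_into_f_f)

lemma state_index_eq_iff [simp]: "state_index qs q = state_index qs q' \<longleftrightarrow> q = q'"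
  by (metis nth_state_index)

lemma long_inputD: "2 < n" "length qs < n" "x \<noteq> []"
  using long_input by auto

lemma state_index_less_length_input [simp]: "state_index qs q < n"
  using long_inputD(2) state_index_less[of q] by linarith

lemma sat_cell_fm:
  assumes "v i < n" "v (k + i) < n"
  shows "sat x v (cell_fm k i) \<longleftrightarrow> (\<exists>h\<le>Suc n. v i = cell_kind n h \<and> v (k + i) = cell_offset n h)"
  using assms long_inputD by (subst ex_cell_iff) (auto simp: cell_fm_def)

lemma sat_config_fm:
  assumes "v (2 * k) < n"
  shows "sat x v (config_fm (length qs) k) \<longleftrightarrow> (\<forall>i<k. sat x v (cell_fm k i)) \<and> v (2 * k) < length qs"
proof -
  have "(\<exists>j\<in>set [0..<length qs]. v (2 * k) = eval_trm n v (TNum j)) \<longleftrightarrow> v (2 * k) < length qs"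
    using long_inputD by (auto intro!: bexI[of _ "v (2 * k)"])
  then show ?thesis
    by (auto simp: config_fm_def)
qed

lemma mem_config_tuples_iff:
  "as \<in> config_tuples \<longleftrightarrow> length as = 2 * k + 1 \<and> set as \<subseteq> {..<n} \<and>
     (\<forall>i<k. \<exists>h\<le>Suc n. as ! i = cell_kind n h \<and> as ! (k + i) = cell_offset n h) \<and>
     as ! (2 * k) < length qs"
proof -
  have "sat x (asg as) (config_fm (length qs) k) \<longleftrightarrow>
      (\<forall>i<k. \<exists>h\<le>Suc n. as ! i = cell_kind n h \<and> as ! (k + i) = cell_offset n h) \<and>
      as ! (2 * k) < length qs"
    if len: "length as = 2 * k + 1" and below: "set as \<subseteq> {..<n}"
  proof -
    have "as ! j < n" if "j < 2 * k + 1" for j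
      using that len below by (metis lessThan_iff nth_mem subsetD)
    then show ?thesis
      using len by (simp add: sat_config_fm sat_cell_fm)
  qed
  then show ?thesis
    by (auto simp: config_tuples_def)
qed

lemma encode_in_config_tuples:
  assumes "c \<in> configs M x"
  shows "encode c \<in> config_tuples"
proof -
  obtain q p where qp: "c = (q, p)" and len: "length p = k" and le: "\<forall>h\<in>set p. h \<le> Suc n"
    using assms by (cases c) (auto simp: configs_def)
  have "cell_kind n h < n" "cell_offset n h < n" for h
    using long_inputD by (auto simp: cell_kind_def cell_offset_def)
  then have "set (encode c) \<subseteq> {..<n}"
    by (auto simp: qp encode_config_def)
  moreover have "\<exists>h\<le>Suc n. encode c ! i = cell_kind n h \<and> encode c ! (k + i) = cell_offset n h"
    if "i < k" for i
    using that len le by (intro exI[of _ "p ! i"]) (simp add: qp nth_encode_config)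
  ultimately show ?thesis
    using len by (simp add: mem_config_tuples_iff qp nth_encode_config_state)
qed

abbreviation "decode \<equiv> decode_config qs n k"

lemma decode_in_configs:
  assumes "as \<in> config_tuples"
  shows "decode as \<in> configs M x"
proof -
  have "cell_position n (as ! i) (as ! (k + i)) \<le> Suc n" if "i < k" for i
    using assms that by (auto simp: mem_config_tuples_iff cell_position_kind_offset)
  then show ?thesis
    by (auto simp: configs_def decode_config_def)
qed

lemma decode_encode:
  assumes "c \<in> configs M x"
  shows "decode (encode c) = c"
proof -
  obtain q p where qp: "c = (q, p)" and "length p = k" and "\<forall>h\<in>set p. h \<le> Suc n"
    using assms by (cases c) (auto simp: configs_def)
  then have "map (\<lambda>i. cell_position n (encode c ! i) (encode c ! (k + i))) [0..<k] = p"
    by (auto intro: nth_equalityI simp: qp nth_encode_config cell_position_kind_offset)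
  then show ?thesis
    using \<open>length p = k\<close> by (simp add: decode_config_def qp nth_encode_config_state)
qed

lemma encode_decode:
  assumes "as \<in> config_tuples"
  shows "encode (decode as) = as"
proof -
  have "cell_kind n (cell_position n (as ! i) (as ! (k + i))) = as ! i"
    "cell_offset n (cell_position n (as ! i) (as ! (k + i))) = as ! (k + i)" if "i < k" for i
    using assms that by (auto simp: mem_config_tuples_iff cell_position_kind_offset)
  then show ?thesis
    using assms unfolding decode_config_def
    by (intro encode_config_eqI[symmetric]) (auto simp: mem_config_tuples_iff)
qed

lemma bij_betw_encode: "bij_betw encode (configs M x) config_tuples"
  by (rule bij_betw_byWitness[where f' = decode])
    (use decode_encode encode_decode encode_in_config_tuples decode_in_configs in blast)+

end

section \<open>The edge formula\<close>

fun reads_fm :: "nat \<Rightarrow> 'a tsym \<Rightarrow> nat \<Rightarrow> 'a fm" where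
  "reads_fm k LEnd i = FEq (TVar i) (TNum 1)"
| "reads_fm k REnd i = FEq (TVar i) (TNum 2)"
| "reads_fm k (Sym \<sigma>) i = FConj (FEq (TVar i) TMin) (FPred \<sigma> (TVar (k + i)))"

definition next_cell_fm :: "trm \<Rightarrow> trm \<Rightarrow> trm \<Rightarrow> trm \<Rightarrow> 'a fm" where
  "next_cell_fm A B A' B' =
     FOrs [FAnds [FEq A (TNum 1), FEq A' TMin, FEq B' TMin],
           FAnds [FEq A TMin, FNeg (FEq B TMax), FEq A' TMin, FEq B' (TS B)],
           FAnds [FEq A TMin, FEq B TMax, FEq A' (TNum 2)]]"

definition moves_fm :: "nat \<Rightarrow> int \<Rightarrow> nat \<Rightarrow> 'a fm" where
  "moves_fm k d i =
     (let A = TVar i; B = TVar (k + i); A' = TVar (2 * k + 1 + i); B' = TVar (2 * k + 1 + k + i)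
      in if d = 0 then FConj (FEq A A') (FEq B B')
         else if d = 1 then next_cell_fm A B A' B'
         else next_cell_fm A' B' A B)"

definition trans_fm :: "'q list \<Rightarrow> nat \<Rightarrow> 'q \<times> 'a tsym list \<times> 'q \<times> int list \<Rightarrow> 'a fm" where
  "trans_fm qs k \<tau> = (case \<tau> of (q, a, q', d) \<Rightarrow>
     FAnds ([FEq (TVar (2 * k)) (TNum (state_index qs q)),
             FEq (TVar (2 * k + 1 + 2 * k)) (TNum (state_index qs q'))] @
            map (\<lambda>i. FConj (reads_fm k (a ! i) i) (moves_fm k (d ! i) i)) [0..<k]))"

definition edge_fm :: "'q list \<Rightarrow> nat \<Rightarrow> ('q \<times> 'a tsym list \<times> 'q \<times> int list) list \<Rightarrow> 'a fm" where
  "edge_fm qs k ts = FOrs (map (trans_fm qs k) ts)"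

context config_coding
begin

lemma sat_reads_fm:
  assumes "v i = cell_kind n h" "v (k + i) = cell_offset n h" "h \<le> Suc n"
  shows "sat x v (reads_fm k s i) \<longleftrightarrow> tape_sym x h = s"
  using assms long_inputD
  by (cases s) (auto simp: cell_kind_def cell_offset_def tape_sym_def)

lemma sat_next_cell_fm:
  assumes "eval_trm n v A = cell_kind n h" "eval_trm n v B = cell_offset n h"
    and "eval_trm n v A' = cell_kind n h'" "eval_trm n v B' = cell_offset n h'"
    and "h \<le> Suc n" "h' \<le> Suc n"
  shows "sat x v (next_cell_fm A B A' B') \<longleftrightarrow> h' = Suc h"
  using assms long_inputD
  by (auto simp: next_cell_fm_def cell_kind_def cell_offset_def Let_def split: if_splits)

lemma sat_moves_fm:
  assumes "v i = cell_kind n h" "v (k + i) = cell_offset n h"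
    and "v (2 * k + 1 + i) = cell_kind n h'" "v (2 * k + 1 + k + i) = cell_offset n h'"
    and "h \<le> Suc n" "h' \<le> Suc n" "d \<in> {-1, 0, 1}"
  shows "sat x v (moves_fm k d i) \<longleftrightarrow> int h' = int h + d"
  using assms sat_next_cell_fm[where h = h and h' = h'] sat_next_cell_fm[where h = h' and h' = h]
    cell_kind_offset_eq_iff[where h = h and h' = h']
  by (auto simp: moves_fm_def Let_def)

lemma sat_trans_fm:
  assumes c: "(q, p) \<in> configs M x" and c': "(q', p') \<in> configs M x"
    and a: "length a = k" and d: "length d = k" "set d \<subseteq> {-1, 0, 1}"
  shows "sat x (asg (encode (q, p) @ encode (q', p'))) (trans_fm qs k (q0, a, q0', d)) \<longleftrightarrow>
     q0 = q \<and> q0' = q' \<and> a = map (tape_sym x) p \<and> map int p' = map2 (\<lambda>j e. int j + e) p d"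
proof -
  let ?v = "asg (encode (q, p) @ encode (q', p'))"
  have len: "length p = k" "length p' = k" and le: "\<forall>h\<in>set p. h \<le> Suc n" "\<forall>h\<in>set p'. h \<le> Suc n"
    using c c' by (auto simp: configs_def)
  have heads: "sat x ?v (FConj (reads_fm k (a ! i) i) (moves_fm k (d ! i) i)) \<longleftrightarrow>
      tape_sym x (p ! i) = a ! i \<and> int (p' ! i) = int (p ! i) + d ! i" if "i < k" for i
  proof -
    have "d ! i \<in> set d"
      using that d by simp
    with d have "d ! i \<in> {-1, 0, 1}"
      by blast
    moreover have "?v i = cell_kind n (p ! i)" "?v (k + i) = cell_offset n (p ! i)"
      "?v (2 * k + 1 + i) = cell_kind n (p' ! i)" "?v (2 * k + 1 + k + i) = cell_offset n (p' ! i)"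
      using that len by (simp_all add: asg_append nth_encode_config)
    moreover have "p ! i \<le> Suc n" "p' ! i \<le> Suc n"
      using that len le by auto
    ultimately show ?thesis
      by (simp add: sat_reads_fm sat_moves_fm)
  qed
  have "?v (2 * k) = state_index qs q" "?v (2 * k + 1 + 2 * k) = state_index qs q'"
    using len long_inputD by (simp_all add: asg_append nth_encode_config_state)
  then have states: "sat x ?v (FEq (TVar (2 * k)) (TNum (state_index qs q0))) \<longleftrightarrow> q0 = q"
    "sat x ?v (FEq (TVar (2 * k + 1 + 2 * k)) (TNum (state_index qs q0'))) \<longleftrightarrow> q0' = q'"
    by auto
  show ?thesis
    using heads states len a d by (auto simp: trans_fm_def list_eq_iff_nth_eq)
qed

lemma sat_edge_fm:
  assumes wf: "nmfa_wf M" and ts: "set ts = trans M"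
    and c: "(q, p) \<in> configs M x" and c': "(q', p') \<in> configs M x"
  shows "sat x (asg (encode (q, p) @ encode (q', p'))) (edge_fm qs k ts) \<longleftrightarrow>
    ((q, p), (q', p')) \<in> conf_edges M x"
proof -
  let ?v = "asg (encode (q, p) @ encode (q', p'))"
  let ?moved = "\<lambda>d. map int p' = map2 (\<lambda>j e. int j + e) p d"
  have well_typed: "length a = k \<and> length d = k \<and> set d \<subseteq> {-1, 0, 1}"
    if "(q0, a, q0', d) \<in> trans M" for q0 a q0' d
    using wf that unfolding nmfa_wf_def by fastforce
  have "sat x ?v (edge_fm qs k ts) \<longleftrightarrow> (\<exists>\<tau>\<in>trans M. sat x ?v (trans_fm qs k \<tau>))"
    by (simp add: edge_fm_def ts)
  also have "\<dots> \<longleftrightarrow> (\<exists>d. (q, map (tape_sym x) p, q', d) \<in> trans M \<and> ?moved d)"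
  proof
    assume "\<exists>\<tau>\<in>trans M. sat x ?v (trans_fm qs k \<tau>)"
    then obtain q0 a q0' d
      where \<tau>: "(q0, a, q0', d) \<in> trans M" "sat x ?v (trans_fm qs k (q0, a, q0', d))"
      by auto
    moreover have "length a = k" "length d = k" "set d \<subseteq> {-1, 0, 1}"
      using well_typed[OF \<tau>(1)] by auto
    ultimately show "\<exists>d. (q, map (tape_sym x) p, q', d) \<in> trans M \<and> ?moved d"
      using sat_trans_fm[OF c c'] by auto
  next
    assume "\<exists>d. (q, map (tape_sym x) p, q', d) \<in> trans M \<and> ?moved d"
    then obtain d where \<tau>: "(q, map (tape_sym x) p, q', d) \<in> trans M" "?moved d"
      by blast
    moreover have "length (map (tape_sym x) p) = k" "length d = k" "set d \<subseteq> {-1, 0, 1}"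
      using well_typed[OF \<tau>(1)] by auto
    ultimately have "sat x ?v (trans_fm qs k (q, map (tape_sym x) p, q', d))"
      using sat_trans_fm[OF c c'] by simp
    with \<tau>(1) show "\<exists>\<tau>\<in>trans M. sat x ?v (trans_fm qs k \<tau>)" ..
  qed
  also have "\<dots> \<longleftrightarrow> ((q, p), (q', p')) \<in> conf_edges M x"
    using c c' well_typed by (auto simp: conf_edges_def configs_def)
  finally show ?thesis .
qed

end

section \<open>The successor function\<close>

definition carry_fm :: "nat \<Rightarrow> 'a fm" where
  "carry_fm j = FAnds (map (\<lambda>i. FEq (TVar i) (TNum 2)) [0..<j])"

definition incr_head_trms :: "nat \<Rightarrow> nat \<Rightarrow> trm \<Rightarrow> trm \<Rightarrow> trm list" where
  "incr_head_trms k j A B =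
     map (\<lambda>i. if i < j then TNum 1 else if i = j then A else TVar i) [0..<k] @
     map (\<lambda>i. if i < j then TMin else if i = j then B else TVar (k + i)) [0..<k] @ [TVar (2 * k)]"

definition incr_head_cases :: "nat \<Rightarrow> nat \<Rightarrow> ('a fm \<times> trm list) list" where
  "incr_head_cases k j =
     [(FConj (carry_fm j) (FEq (TVar j) (TNum 1)),
         incr_head_trms k j TMin TMin),
      (FConj (carry_fm j) (FConj (FEq (TVar j) TMin) (FNeg (FEq (TVar (k + j)) TMax))),
         incr_head_trms k j TMin (TS (TVar (k + j)))),
      (FConj (carry_fm j) (FConj (FEq (TVar j) TMin) (FEq (TVar (k + j)) TMax)),
         incr_head_trms k j (TNum 2) TMin)]"

definition incr_state_fm :: "nat \<Rightarrow> nat \<Rightarrow> 'a fm" where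
  "incr_state_fm nq k = FConj (carry_fm k) (FNeg (FEq (TVar (2 * k)) (TNum (nq - 1))))"

definition incr_state_trms :: "nat \<Rightarrow> trm list" where
  "incr_state_trms k = replicate k (TNum 1) @ replicate k TMin @ [TS (TVar (2 * k))]"

text \<open>The successor enumerates configurations in mixed radix: head 0 is the least significant
  digit, running through the positions \<open>0, \<dots>, n + 1\<close>, and the state index is the most
  significant one. The last configuration falls through to the default case, the identity.\<close>

definition succ_cases :: "nat \<Rightarrow> nat \<Rightarrow> 'a cases" where
  "succ_cases nq k =
     (concat (map (incr_head_cases k) [0..<k]) @ [(incr_state_fm nq k, incr_state_trms k)],
      map TVar [0..<2 * k + 1])"

context config_coding
begin

lemma sat_carry_fm:
  assumes "(q, p) \<in> configs M x" "j \<le> k"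
  shows "sat x (asg (encode (q, p))) (carry_fm j) \<longleftrightarrow> (\<forall>i<j. p ! i = Suc n)"
proof -
  have "length p = k" "\<forall>i<k. p ! i \<le> Suc n"
    using assms(1) by (auto simp: configs_def)
  then show ?thesis
    using assms(2) long_inputD by (auto simp: carry_fm_def nth_encode_config cell_kind_eq_2_iff)
qed

lemma eval_incr_head_trms:
  assumes "length p = k" "j < k"
    and "eval_trm n (asg (encode (q, p))) A = cell_kind n (Suc (p ! j))"
    and "eval_trm n (asg (encode (q, p))) B = cell_offset n (Suc (p ! j))"
  shows "map (eval_trm n (asg (encode (q, p)))) (incr_head_trms k j A B) = encode (q, incr_at j p)"
  using assms long_inputD
  by (intro encode_config_eqI)
    (auto simp: incr_head_trms_def nth_append nth_incr_at nth_encode_config nth_encode_config_state)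

lemma eval_incr_head_case:
  assumes c: "(q, p) \<in> configs M x" and "j < k"
    and case_j: "(\<phi>, ts) \<in> set (incr_head_cases k j)" and sat: "sat x (asg (encode (q, p))) \<phi>"
  shows "p ! j \<le> n \<and> map (eval_trm n (asg (encode (q, p)))) ts = encode (q, incr_at j p)"
proof -
  let ?v = "asg (encode (q, p))"
  have len: "length p = k" and le: "p ! j \<le> Suc n"
    using c \<open>j < k\<close> by (auto simp: configs_def)
  have v: "?v j = cell_kind n (p ! j)" "?v (k + j) = cell_offset n (p ! j)"
    using len \<open>j < k\<close> by (simp_all add: nth_encode_config)
  from case_j consider
      (left) "\<phi> = FConj (carry_fm j) (FEq (TVar j) (TNum 1))" "ts = incr_head_trms k j TMin TMin"
    | (inner) "\<phi> = FConj (carry_fm j) (FConj (FEq (TVar j) TMin) (FNeg (FEq (TVar (k + j)) TMax)))"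
        "ts = incr_head_trms k j TMin (TS (TVar (k + j)))"
    | (right) "\<phi> = FConj (carry_fm j) (FConj (FEq (TVar j) TMin) (FEq (TVar (k + j)) TMax))"
        "ts = incr_head_trms k j (TNum 2) TMin"
    by (auto simp: incr_head_cases_def)
  then show ?thesis
  proof cases
    case left
    then have "cell_kind n (p ! j) = 1"
      using sat v long_inputD by simp
    then have "p ! j = 0"
      by (cases "p ! j") (simp_all split: if_splits)
    with left show ?thesis
      using len \<open>j < k\<close> long_inputD by (auto intro: eval_incr_head_trms)
  next
    case inner
    then have "cell_kind n (p ! j) = 0" "cell_offset n (p ! j) \<noteq> n - 1"
      using sat v by simp_all
    then obtain h where "p ! j = Suc h" "Suc h < n"
      by (cases "p ! j") (auto split: if_splits)
    with inner show ?thesis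
      using len \<open>j < k\<close> v by (auto simp: Let_def intro: eval_incr_head_trms)
  next
    case right
    then have "cell_kind n (p ! j) = 0" "cell_offset n (p ! j) = n - 1"
      using sat v by simp_all
    then have "p ! j = n"
      using long_inputD by (cases "p ! j") (auto split: if_splits)
    with right show ?thesis
      using len \<open>j < k\<close> long_inputD by (auto intro: eval_incr_head_trms)
  qed
qed

lemma incr_head_case_complete:
  assumes c: "(q, p) \<in> configs M x" and "j < k" and carry: "\<forall>i<j. p ! i = Suc n" and "p ! j \<le> n"
  shows "\<exists>(\<phi>, ts) \<in> set (incr_head_cases k j). sat x (asg (encode (q, p))) \<phi>"
proof -
  let ?v = "asg (encode (q, p))"
  have "length p = k"
    using c by (simp add: configs_def)
  then have v: "?v j = cell_kind n (p ! j)" "?v (k + j) = cell_offset n (p ! j)"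
    using \<open>j < k\<close> by (simp_all add: nth_encode_config)
  have "sat x ?v (carry_fm j)"
    using sat_carry_fm[OF c] \<open>j < k\<close> carry by simp
  moreover have "cell_kind n (p ! j) = 1 \<or> cell_kind n (p ! j) = 0"
    using \<open>p ! j \<le> n\<close> by (simp add: cell_kind_def)
  ultimately show ?thesis
    using v long_inputD by (auto simp: incr_head_cases_def)
qed

lemma sat_incr_state_fm:
  assumes c: "(q, p) \<in> configs M x"
  shows "sat x (asg (encode (q, p))) (incr_state_fm (length qs) k) \<longleftrightarrow>
    (\<forall>i<k. p ! i = Suc n) \<and> Suc (state_index qs q) < length qs"
proof -
  have "length p = k"
    using c by (simp add: configs_def)
  moreover have "Suc (state_index qs q) < length qs \<longleftrightarrow> state_index qs q \<noteq> length qs - 1"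
    using state_index_less[of q] by linarith
  ultimately show ?thesis
    using sat_carry_fm[OF c] long_inputD by (simp add: incr_state_fm_def nth_encode_config_state)
qed

lemma eval_incr_state_trms:
  assumes "length p = k" "Suc (state_index qs q) < length qs"
  shows "map (eval_trm n (asg (encode (q, p)))) (incr_state_trms k) =
    encode (qs ! Suc (state_index qs q), replicate k 0)"
  using assms long_inputD
  by (intro encode_config_eqI) (auto simp: incr_state_trms_def nth_append nth_encode_config_state)

lemma succ_case_fires [consumes 3, case_names head state]:
  assumes c: "(q, p) \<in> configs M x"
    and "(\<phi>, ts) \<in> set (fst (succ_cases (length qs) k))" and sat: "sat x (asg (encode (q, p))) \<phi>"
  obtains (head) j where "j < k" "\<forall>i<j. p ! i = Suc n" "p ! j \<le> n"
      "map (eval_trm n (asg (encode (q, p)))) ts = encode (q, incr_at j p)"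
    | (state) "\<forall>i<k. p ! i = Suc n" "Suc (state_index qs q) < length qs"
      "map (eval_trm n (asg (encode (q, p)))) ts =
        encode (qs ! Suc (state_index qs q), replicate k 0)"
proof -
  from assms(2) consider (head_case) j where "j < k" "(\<phi>, ts) \<in> set (incr_head_cases k j)"
    | (state_case) "\<phi> = incr_state_fm (length qs) k" "ts = incr_state_trms k"
    by (auto simp: succ_cases_def)
  then show ?thesis
  proof cases
    case (head_case j)
    then have "sat x (asg (encode (q, p))) (carry_fm j)"
      using sat by (auto simp: incr_head_cases_def)
    then have "\<forall>i<j. p ! i = Suc n"
      using sat_carry_fm[OF c] \<open>j < k\<close> by simp
    then show ?thesis
      using eval_incr_head_case[OF c head_case sat] head \<open>j < k\<close> by blast
  next
    case state_case
    moreover have "length p = k"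
      using c by (simp add: configs_def)
    ultimately show ?thesis
      using sat_incr_state_fm[OF c] eval_incr_state_trms sat state by metis
  qed
qed

lemma eval_succ_cases_head:
  assumes c: "(q, p) \<in> configs M x" and "j < k" and carry: "\<forall>i<j. p ! i = Suc n" and "p ! j \<le> n"
  shows "eval_cases x (asg (encode (q, p))) (succ_cases (length qs) k) = encode (q, incr_at j p)"
proof -
  obtain \<phi> ts where "(\<phi>, ts) \<in> set (incr_head_cases k j)" and sat: "sat x (asg (encode (q, p))) \<phi>"
    using incr_head_case_complete[OF c \<open>j < k\<close> carry \<open>p ! j \<le> n\<close>] by blast
  then have "(\<phi>, ts) \<in> set (fst (succ_cases (length qs) k))"
    using \<open>j < k\<close> by (auto simp: succ_cases_def)
  then show ?thesis
  proof (rule eval_cases_eqI[OF _ sat])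
    fix \<phi>' ts'
    assume "(\<phi>', ts') \<in> set (fst (succ_cases (length qs) k))" "sat x (asg (encode (q, p))) \<phi>'"
    with c show "map (eval_trm n (asg (encode (q, p)))) ts' = encode (q, incr_at j p)"
    proof (cases rule: succ_case_fires)
      case (head j')
      then have "j' = j"
        using carry \<open>p ! j \<le> n\<close> by (metis Suc_n_not_le_n linorder_neqE_nat)
      with head show ?thesis
        by simp
    qed (use \<open>j < k\<close> \<open>p ! j \<le> n\<close> in auto)
  qed
qed

lemma eval_succ_cases_state:
  assumes c: "(q, p) \<in> configs M x" and carry: "\<forall>i<k. p ! i = Suc n"
    and "Suc (state_index qs q) < length qs"
  shows "eval_cases x (asg (encode (q, p))) (succ_cases (length qs) k) =
    encode (qs ! Suc (state_index qs q), replicate k 0)"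
proof (rule eval_cases_eqI)
  show "(incr_state_fm (length qs) k, incr_state_trms k) \<in> set (fst (succ_cases (length qs) k))"
    by (simp add: succ_cases_def)
  show "sat x (asg (encode (q, p))) (incr_state_fm (length qs) k)"
    using assms sat_incr_state_fm[OF c] by simp
next
  fix \<phi>' ts'
  assume "(\<phi>', ts') \<in> set (fst (succ_cases (length qs) k))" "sat x (asg (encode (q, p))) \<phi>'"
  with c show "map (eval_trm n (asg (encode (q, p)))) ts' =
      encode (qs ! Suc (state_index qs q), replicate k 0)"
    by (cases rule: succ_case_fires) (use carry in auto)
qed

lemma eval_succ_cases_last:
  "eval_cases x (asg (encode (last qs, replicate k (Suc n)))) (succ_cases (length qs) k) =
    encode (last qs, replicate k (Suc n))"
proof -
  let ?c = "(last qs, replicate k (Suc n))"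
  have c: "?c \<in> configs M x"
    by (simp add: configs_def)
  have "qs \<noteq> []"
    using set_qs by auto
  then have last_index: "Suc (state_index qs (last qs)) = length qs"
    by (simp add: last_conv_nth)
  have "eval_cases x (asg (encode ?c)) (succ_cases (length qs) k) =
      map (eval_trm n (asg (encode ?c))) (snd (succ_cases (length qs) k :: 'a cases))"
  proof (rule eval_cases_default)
    fix \<phi> :: "'a fm" and ts assume "(\<phi>, ts) \<in> set (fst (succ_cases (length qs) k))"
    show "\<not> sat x (asg (encode ?c)) \<phi>"
    proof
      assume "sat x (asg (encode ?c)) \<phi>"
      with c \<open>(\<phi>, ts) \<in> set (fst (succ_cases (length qs) k))\<close> show False
        by (cases rule: succ_case_fires) (use last_index in auto)
    qed
  qed
  also have "\<dots> = encode ?c"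
    using eval_TVars[of n "encode ?c"] unfolding succ_cases_def
    by (simp only: snd_conv length_encode_config length_replicate)
  finally show ?thesis .
qed

definition config_radix :: "nat list" where
  "config_radix = replicate k (Suc (Suc n)) @ [length qs]"

definition config_of_digits :: "nat list \<Rightarrow> 'q \<times> nat list" where
  "config_of_digits ds = (qs ! last ds, butlast ds)"

lemma length_config_radix [simp]: "length config_radix = Suc k"
  by (simp add: config_radix_def)

lemma nth_config_radix: "l < Suc k \<Longrightarrow> config_radix ! l = (if l < k then Suc (Suc n) else length qs)"
  by (simp add: config_radix_def nth_append)

lemma list_all2_config_radix_iff:
  "list_all2 (<) ds config_radix \<longleftrightarrow>
     (\<exists>p s. ds = p @ [s] \<and> length p = k \<and> (\<forall>h\<in>set p. h \<le> Suc n) \<and> s < length qs)"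
proof -
  have "list_all2 (<) p (replicate k (Suc (Suc n))) \<longleftrightarrow> length p = k \<and> (\<forall>h\<in>set p. h \<le> Suc n)" for p
    by (auto simp: list_all2_conv_all_nth all_set_conv_all_nth less_Suc_eq_le)
  then show ?thesis
    by (fastforce simp: config_radix_def list_all2_append2 list_all2_Cons2)
qed

lemma bij_betw_config_of_digits:
  "bij_betw config_of_digits {ds. list_all2 (<) ds config_radix} (configs M x)"
  by (rule bij_betw_byWitness[where f' = "\<lambda>(q, p). p @ [state_index qs q]"])
    (auto simp: list_all2_config_radix_iff config_of_digits_def configs_def)

lemma eval_succ_cases_incr_at:
  assumes ds: "list_all2 (<) ds config_radix" and "j < Suc k"
    and maximal: "\<forall>l<j. Suc (ds ! l) = config_radix ! l" and "Suc (ds ! j) < config_radix ! j"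
  shows "eval_cases x (asg (encode (config_of_digits ds))) (succ_cases (length qs) k) =
    encode (config_of_digits (incr_at j ds))"
proof -
  obtain p s where ds_eq: "ds = p @ [s]" and len: "length p = k" and "\<forall>h\<in>set p. h \<le> Suc n"
    and "s < length qs"
    using ds by (auto simp: list_all2_config_radix_iff)
  then have c: "(qs ! s, p) \<in> configs M x"
    by (simp add: configs_def)
  have carry: "\<forall>i<j. i < k \<longrightarrow> p ! i = Suc n"
    using maximal \<open>j < Suc k\<close> len by (simp add: ds_eq nth_config_radix nth_append)
  show ?thesis
  proof (cases "j < k")
    case True
    then have "p ! j \<le> n"
      using \<open>Suc (ds ! j) < config_radix ! j\<close> len by (simp add: ds_eq nth_config_radix nth_append)
    then show ?thesis
      using eval_succ_cases_head[OF c True] carry True len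
      by (simp add: ds_eq config_of_digits_def incr_at_append)
  next
    case False
    with \<open>j < Suc k\<close> have "j = k"
      by simp
    then have "Suc s < length qs"
      using \<open>Suc (ds ! j) < config_radix ! j\<close> len by (simp add: ds_eq nth_config_radix nth_append)
    then show ?thesis
      using eval_succ_cases_state[OF c] carry \<open>j = k\<close> \<open>s < length qs\<close> len
      by (simp add: ds_eq config_of_digits_def incr_at_append_length[of p s, simplified len])
  qed
qed

lemma successor_on_config_tuples:
  "successor_on config_tuples
     (encode (hd qs, replicate k 0)) (encode (last qs, replicate k (Suc n)))
     (\<lambda>as. eval_cases x (asg as) (succ_cases (length qs) k))"
proof -
  let ?N = "prod_list config_radix"
  define f where "f i = encode (config_of_digits (radix_digits config_radix i))" for i
  have "qs \<noteq> []"
    using set_qs by auto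
  have bij: "bij_betw f {..<?N} config_tuples"
    unfolding f_def
    using bij_betw_trans[OF bij_betw_trans[OF bij_betw_radix_digits bij_betw_config_of_digits]
        bij_betw_encode]
    by (simp add: comp_def)
  have "0 < ?N"
    using \<open>qs \<noteq> []\<close> by (simp add: config_radix_def)
  have "radix_digits config_radix 0 = replicate k 0 @ [0]"
    by (simp add: radix_digits_0 replicate_append_same)
  then have f_first: "f 0 = encode (hd qs, replicate k 0)"
    using \<open>qs \<noteq> []\<close> by (simp add: f_def config_of_digits_def hd_conv_nth)
  have "radix_digits config_radix (?N - 1) = replicate k (Suc n) @ [length qs - 1]"
    using radix_digits_last[OF \<open>0 < ?N\<close>] by (simp add: config_radix_def)
  then have f_last: "f (?N - 1) = encode (last qs, replicate k (Suc n))"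
    using \<open>qs \<noteq> []\<close> by (simp add: f_def config_of_digits_def last_conv_nth)
  have step: "eval_cases x (asg (f i)) (succ_cases (length qs) k) = f (Suc i)"
    if i: "Suc i < ?N" for i
  proof -
    obtain j where "j < length config_radix"
      "\<forall>l<j. Suc (radix_digits config_radix i ! l) = config_radix ! l"
      "Suc (radix_digits config_radix i ! j) < config_radix ! j"
      "radix_digits config_radix (Suc i) = incr_at j (radix_digits config_radix i)"
      using radix_digits_Suc[OF i] by blast
    moreover have "list_all2 (<) (radix_digits config_radix i) config_radix"
      using radix_val_radix_digits i by simp
    ultimately show ?thesis
      unfolding f_def using eval_succ_cases_incr_at by simp
  qed
  show ?thesis
    using successor_on_enumeration[OF bij \<open>0 < ?N\<close> step] eval_succ_cases_last
    unfolding f_first f_last by blast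
qed

end

definition left_config_trms :: "'q list \<Rightarrow> nat \<Rightarrow> 'q \<Rightarrow> trm list" where
  "left_config_trms qs k q = replicate k (TNum 1) @ replicate k TMin @ [TNum (state_index qs q)]"

definition right_config_trms :: "'q list \<Rightarrow> nat \<Rightarrow> 'q \<Rightarrow> trm list" where
  "right_config_trms qs k q = replicate k (TNum 2) @ replicate k TMin @ [TNum (state_index qs q)]"

definition config_interp ::
  "'q list \<Rightarrow> nat \<Rightarrow> ('q \<times> 'a tsym list \<times> 'q \<times> int list) list \<Rightarrow> 'q \<Rightarrow> 'q \<Rightarrow> 'a interp" where
  "config_interp qs k ts s t =
     \<lparr>idim = 2 * k + 1, idom = config_fm (length qs) k, iedge = edge_fm qs k ts,
      i_s = ([], left_config_trms qs k s), i_t = ([], left_config_trms qs k t),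
      i_min = ([], left_config_trms qs k (hd qs)), i_max = ([], right_config_trms qs k (last qs)),
      i_succ = succ_cases (length qs) k\<rparr>"

lemma fv_config_fm: "fv (config_fm nq k) \<subseteq> {..<2 * k + 1}"
  by (auto simp: config_fm_def cell_fm_def)

lemma fv_edge_fm: "fv (edge_fm qs k ts) \<subseteq> {..<2 * (2 * k + 1)}"
proof -
  have "fv (reads_fm k s i) \<subseteq> {..<2 * k}" if "i < k" for s i
    using that by (cases s) auto
  moreover have "fv (moves_fm k d i) \<subseteq> {..<2 * (2 * k + 1)}" if "i < k" for d i
    using that by (auto simp: moves_fm_def next_cell_fm_def Let_def)
  ultimately show ?thesis
    by (fastforce simp: edge_fm_def trans_fm_def split: prod.splits)
qed

lemma cases_wf_succ_cases: "cases_wf (2 * k + 1) (2 * k + 1) (succ_cases nq k)"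
proof -
  have carry: "i \<in> fv (carry_fm j) \<Longrightarrow> i < j" for i j
    by (auto simp: carry_fm_def)
  have trms: "length (incr_head_trms k j A B) = 2 * k + 1"
    "t \<in> set (incr_head_trms k j A B) \<Longrightarrow> i \<in> fv_trm t \<Longrightarrow> i \<in> fv_trm A \<union> fv_trm B \<or> i < 2 * k + 1"
    for j A B t i
    by (auto simp: incr_head_trms_def)
  have "\<forall>(\<phi>, ts) \<in> set (concat (map (incr_head_cases k) [0..<k])).
      fv \<phi> \<subseteq> {..<2 * k + 1} \<and> length ts = 2 * k + 1 \<and> (\<forall>t\<in>set ts. fv_trm t \<subseteq> {..<2 * k + 1})"
    by (auto simp: incr_head_cases_def trms dest!: carry trms(2))
  moreover have "fv (incr_state_fm nq k) \<subseteq> {..<2 * k + 1}"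
    by (auto simp: incr_state_fm_def dest!: carry)
  moreover have "length (incr_state_trms k) = 2 * k + 1"
    "\<forall>t\<in>set (incr_state_trms k). fv_trm t \<subseteq> {..<2 * k + 1}"
    by (auto simp: incr_state_trms_def)
  ultimately show ?thesis
    unfolding cases_wf_def succ_cases_def by auto
qed

lemma interp_wf_config_interp: "interp_wf (config_interp qs k ts s t)"
  unfolding interp_wf_def config_interp_def interp.select_convs
  by (intro conjI fv_config_fm fv_edge_fm cases_wf_succ_cases)
    (auto simp: cases_wf_def left_config_trms_def right_config_trms_def)

lemma qfree_config_fm: "qfree (config_fm nq k)"
  by (simp add: config_fm_def cell_fm_def)

lemma qfree_edge_fm: "qfree (edge_fm qs k ts)"
proof -
  have "qfree (reads_fm k s i)" "qfree (moves_fm k d i)" for s d i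
    by (cases s) (simp_all add: moves_fm_def next_cell_fm_def Let_def)
  then show ?thesis
    by (auto simp: edge_fm_def trans_fm_def split: prod.splits)
qed

lemma cases_qf_succ_cases: "cases_qf (succ_cases nq k)"
  by (auto simp: cases_qf_def succ_cases_def incr_head_cases_def incr_state_fm_def carry_fm_def)

lemma interp_qf_config_interp: "interp_qf (config_interp qs k ts s t)"
  unfolding interp_qf_def config_interp_def interp.select_convs
  by (intro conjI qfree_config_fm qfree_edge_fm cases_qf_succ_cases) (simp_all add: cases_qf_def)

context config_coding
begin

lemma iconst_left_config_trms: "iconst ([], left_config_trms qs k q) x = encode (q, replicate k 0)"
  and iconst_right_config_trms:
    "iconst ([], right_config_trms qs k q) x = encode (q, replicate k (Suc n))"
  using long_inputD
  by (simp_all add: iconst_def eval_cases_def left_config_trms_def right_config_trms_def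
      encode_config_def)

lemma idomain_config_interp: "idomain (config_interp qs k ts s t) x = config_tuples"
  by (simp add: idomain_def config_interp_def config_tuples_def)

lemma two_pointed_iso_config_interp:
  assumes "nmfa_wf M" "set ts = trans M"
  defines "\<pi> \<equiv> config_interp qs k ts (start M) (final M)"
  shows "two_pointed_iso (idomain \<pi> x) (iE \<pi> x) (iconst (i_s \<pi>) x) (iconst (i_t \<pi>) x)
    (configs M x) (conf_edges M x) (init_conf M) (final_conf M)"
proof -
  have "iconst (i_s \<pi>) x = encode (init_conf M)" "iconst (i_t \<pi>) x = encode (final_conf M)"
    by (simp_all add: \<pi>_def config_interp_def init_conf_def final_conf_def iconst_left_config_trms)
  moreover have "two_pointed_iso config_tuples (iE \<pi> x)
      (encode (init_conf M)) (encode (final_conf M))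
      (configs M x) (conf_edges M x) (init_conf M) (final_conf M)"
  proof (rule two_pointed_isoI[OF bij_betw_encode])
    fix c c' assume "c \<in> configs M x" "c' \<in> configs M x"
    then show "(encode c, encode c') \<in> iE \<pi> x \<longleftrightarrow> (c, c') \<in> conf_edges M x"
      using sat_edge_fm[OF assms(1,2)] encode_in_config_tuples idomain_config_interp
      by (cases c, cases c') (simp add: iE_def \<pi>_def config_interp_def)
  qed (simp_all add: init_conf_def final_conf_def configs_def)
  ultimately show ?thesis
    by (simp add: \<pi>_def idomain_config_interp)
qed

lemma successor_on_config_interp:
  fixes ts :: "('q \<times> 'a tsym list \<times> 'q \<times> int list) list" and s t :: 'q
  defines "\<pi> \<equiv> config_interp qs k ts s t"
  shows "successor_on (idomain \<pi> x) (iconst (i_min \<pi>) x) (iconst (i_max \<pi>) x) (iS \<pi> x)"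
proof -
  have "idomain \<pi> x = config_tuples"
    unfolding \<pi>_def by (rule idomain_config_interp)
  moreover have "iconst (i_min \<pi>) x = encode (hd qs, replicate k 0)"
    "iconst (i_max \<pi>) x = encode (last qs, replicate k (Suc n))"
    "iS \<pi> x = (\<lambda>as. eval_cases x (asg as) (succ_cases (length qs) k))"
    by (simp_all add: \<pi>_def config_interp_def iconst_left_config_trms iconst_right_config_trms
        iS_def fun_eq_iff)
  ultimately show ?thesis
    using successor_on_config_tuples by simp
qed

end

lemma finite_trans:
  fixes M :: "('q::finite, 'a::finite) nmfa"
  assumes "nmfa_wf M"
  shows "finite (trans M)"
proof -
  have "(UNIV :: 'a tsym set) = {LEnd, REnd} \<union> range Sym"
    by (auto intro: tsym.exhaust)
  moreover have "finite ({LEnd, REnd} \<union> range (Sym :: 'a \<Rightarrow> 'a tsym))"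
    by simp
  ultimately have "finite (UNIV :: 'a tsym set)"
    by simp
  moreover have "trans M \<subseteq> UNIV \<times> {a. set a \<subseteq> UNIV \<and> length a = heads M} \<times> UNIV \<times>
      {d. set d \<subseteq> {-1, 0, 1} \<and> length d = heads M}"
    using assms unfolding nmfa_wf_def by fastforce
  ultimately show ?thesis
    by (elim finite_subset) (intro finite_cartesian_product finite_lists_length_eq; simp)
qed

theorem theorem2:
  fixes M :: "('q::finite, 'a::finite) nmfa"
  assumes "nmfa_wf M"
  shows "\<exists>\<pi> :: 'a interp. interp_wf \<pi> \<and> interp_qf \<pi> \<and>
    (\<exists>N. \<forall>x :: 'a list. length x \<ge> N \<longrightarrow>
       two_pointed_iso (idomain \<pi> x) (iE \<pi> x) (iconst (i_s \<pi>) x) (iconst (i_t \<pi>) x)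
                       (configs M x) (conf_edges M x) (init_conf M) (final_conf M) \<and>
       successor_on (idomain \<pi> x) (iconst (i_min \<pi>) x) (iconst (i_max \<pi>) x) (iS \<pi> x))"
proof -
  obtain qs :: "'q list" where qs: "distinct qs" "set qs = UNIV"
    using finite_distinct_list[OF finite_UNIV] by metis
  obtain ts where ts: "set ts = trans M"
    using finite_list[OF finite_trans[OF assms]] by blast
  define \<pi> where "\<pi> = (config_interp qs (heads M) ts (start M) (final M) :: 'a interp)"
  have main: "two_pointed_iso (idomain \<pi> x) (iE \<pi> x) (iconst (i_s \<pi>) x) (iconst (i_t \<pi>) x)
          (configs M x) (conf_edges M x) (init_conf M) (final_conf M) \<and>
        successor_on (idomain \<pi> x) (iconst (i_min \<pi>) x) (iconst (i_max \<pi>) x) (iS \<pi> x)"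
    if "length x \<ge> length qs + 3" for x :: "'a list"
  proof -
    interpret config_coding M qs x
      using qs that by unfold_locales
    show ?thesis
      unfolding \<pi>_def
      using two_pointed_iso_config_interp[OF assms ts] successor_on_config_interp by blast
  qed
  show ?thesis
  proof (intro exI[of _ \<pi>] conjI exI[of _ "length qs + 3"] allI impI)
    show "interp_wf \<pi>" "interp_qf \<pi>"
      unfolding \<pi>_def by (rule interp_wf_config_interp interp_qf_config_interp)+
  qed (use main in blast)+
qed

end
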